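(* Let $r\in\mathbb{R}_+$. The map $(\mathbb{R}^2)^n\to\big[2^{\mathbb{R}^2}\big]^n$ given by $(p_1,\dots,p_n)\mapsto\big(\mathcal{N}_{\mathcal{G}_{\mathrm{LD}}(\{p_1,\dots,p_n\},r)}(p_1),\dots,\mathcal{N}_{\mathcal{G}_{\mathrm{LD}}(\{p_1,\dots,p_n\},r)}(p_n)\big)$ is spatially distributed over the $r$-disk graph $\mathcal{G}_{\mathrm{disk}}(\{p_1,\dots,p_n\},r)$.
   Context: For a tuple $(p_1,\dots,p_n)\in(\mathbb{R}^2)^n$ (possibly with repeated entries), $\mathcal{P}=\{p_1,\dots,p_n\}$ denotes the set of its distinct points. For such a point set, the Voronoi cell of $p_i$ is $V_i(\mathcal{P})=\{q\in\mathbb{R}^2:\|q-p_i\|\le\|q-p_j\|\ \forall p_j\in\mathcal{P}\}$; $B_\rho(p)$ is the closed Euclidean ball of radius $\rho$ about $p$. The $r$-disk graph $\mathcal{G}_{\mathrm{disk}}(\mathcal{P},r)$ has vertex set $\mathcal{P}$ and an edge between distinct $p_i,p_j$ iff $\|p_i-p_j\|\le r$. The $r$-limited Delaunay graph $\mathcal{G}_{\mathrm{LD}}(\mathcal{P},r)$ has vertex set $\mathcal{P}$ and an edge between distinct $p_i,p_j$ iff $\big(V_i(\mathcal{P})\cap B_{r/2}(p_i)\big)\cap\big(V_j(\mathcal{P})\cap B_{r/2}(p_j)\big)\neq\emptyset$. $\mathcal{N}_{\mathcal{G}}(p)$ denotes the set of neighbors of vertex $p$ in the graph $\mathcal{G}$.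 Given a proximity graph function $\mathcal{G}$ (assigning a graph with vertex set $\mathcal{P}$ to each point set $\mathcal{P}$) and a set $Y$, a map $f:(\mathbb{R}^2)^n\to Y^n$ is spatially distributed over $\mathcal{G}$ if there exist maps $\tilde f_i:\mathbb{R}^2\times 2^{\mathbb{R}^2}\to Y$, $i=1,\dots,n$, such that for all $(p_1,\dots,p_n)$, the $i$-th component satisfies $f_i(p_1,\dots,p_n)=\tilde f_i\big(p_i,\{p_j: p_j\in\mathcal{N}_{\mathcal{G}(\{p_1,\dots,p_n\})}(p_i)\}\big)$. *)

theory Defs
  imports "HOL-Analysis.Analysis"
begin

type_synonym pt = "real ^ 2"

text \<open>Tuples $(p_1,\dots,p_n)$ are encoded as functions p :: nat => pt, only the
values at indices i < n matter; the point set is p ` {..<n}.\<close>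

definition point_set :: "nat \<Rightarrow> (nat \<Rightarrow> pt) \<Rightarrow> pt set" where
  "point_set n p = p ` {..<n}"

definition voronoi_cell :: "pt set \<Rightarrow> pt \<Rightarrow> pt set" where
  "voronoi_cell P c = {q. \<forall>pj\<in>P. norm (q - c) \<le> norm (q - pj)}"

text \<open>A proximity graph function is given by its edge relation: G P u v means
u, v are adjacent in the graph G(P) (vertex set P).\<close>

definition disk_graph :: "real \<Rightarrow> pt set \<Rightarrow> pt \<Rightarrow> pt \<Rightarrow> bool" where
  "disk_graph r P u v \<longleftrightarrow> u \<in> P \<and> v \<in> P \<and> u \<noteq> v \<and> norm (u - v) \<le> r"

definition limited_delaunay_graph :: "real \<Rightarrow> pt set \<Rightarrow> pt \<Rightarrow> pt \<Rightarrow> bool" where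
  "limited_delaunay_graph r P u v \<longleftrightarrow> u \<in> P \<and> v \<in> P \<and> u \<noteq> v \<and>
     (voronoi_cell P u \<inter> cball u (r/2)) \<inter> (voronoi_cell P v \<inter> cball v (r/2)) \<noteq> {}"

definition neighbors :: "(pt set \<Rightarrow> pt \<Rightarrow> pt \<Rightarrow> bool) \<Rightarrow> pt set \<Rightarrow> pt \<Rightarrow> pt set" where
  "neighbors G P u = {v \<in> P. G P u v}"

definition spatially_distributed ::
  "nat \<Rightarrow> ((nat \<Rightarrow> pt) \<Rightarrow> nat \<Rightarrow> 'y) \<Rightarrow> (pt set \<Rightarrow> pt \<Rightarrow> pt \<Rightarrow> bool) \<Rightarrow> bool" where
  "spatially_distributed n f G \<longleftrightarrow>
     (\<exists>ft :: nat \<Rightarrow> pt \<Rightarrow> pt set \<Rightarrow> 'y. \<forall>p. \<forall>i<n.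
        f p i = ft i (p i) {p j | j. j < n \<and> p j \<in> neighbors G (point_set n p) (p i)})"

end

theory Submission
  imports Defs
begin

text \<open>A point q of the limited cell of u lies within r/2 of u, so every site w farther than r
  from u is farther than r/2 from q and cannot compete with u for q. Hence the limited cells
  at u, and with them the limited Delaunay edges at u, only depend on the sites in the
  closed r-disk around u, i.e. on u and its r-disk neighbours.\<close>

lemma voronoi_cell_antimono: "Q \<subseteq> P \<Longrightarrow> voronoi_cell P c \<subseteq> voronoi_cell Q c"
  unfolding voronoi_cell_def by blast

lemma voronoi_cell_localize:
  assumes disk: "\<And>w. w \<in> P \<Longrightarrow> norm (u - w) \<le> r \<Longrightarrow> w \<in> Q"
    and "u \<in> Q" and q: "q \<in> voronoi_cell Q c" and qu: "norm (q - u) \<le> r/2"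
  shows "q \<in> voronoi_cell P c"
  unfolding voronoi_cell_def
proof safe
  fix w assume "w \<in> P"
  have qc: "norm (q - c) \<le> norm (q - u)"
    using q \<open>u \<in> Q\<close> unfolding voronoi_cell_def by blast
  show "norm (q - c) \<le> norm (q - w)"
  proof (cases "w \<in> Q")
    case True
    then show ?thesis using q unfolding voronoi_cell_def by blast
  next
    case False
    then have "r < norm (u - w)" using disk \<open>w \<in> P\<close> by force
    also have "\<dots> \<le> norm (u - q) + norm (q - w)"
      using norm_triangle_ineq[of "u - q" "q - w"] by simp
    finally show ?thesis using qc qu by (simp add: norm_minus_commute)
  qed
qed

lemma limited_delaunay_graph_imp_disk_graph:
  assumes "limited_delaunay_graph r P u v"
  shows "disk_graph r P u v"
proof -
  obtain q where "norm (q - u) \<le> r/2" "norm (q - v) \<le> r/2"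
    using assms unfolding limited_delaunay_graph_def by (auto simp: dist_norm norm_minus_commute)
  moreover have "norm (u - v) \<le> norm (u - q) + norm (q - v)"
    using norm_triangle_ineq[of "u - q" "q - v"] by simp
  ultimately show ?thesis
    using assms unfolding limited_delaunay_graph_def disk_graph_def
    by (simp add: norm_minus_commute)
qed

lemma limited_delaunay_graph_localize:
  assumes "Q \<subseteq> P" "u \<in> Q" and disk: "\<And>w. disk_graph r P u w \<Longrightarrow> w \<in> Q"
  shows "limited_delaunay_graph r P u v \<longleftrightarrow> limited_delaunay_graph r Q u v"
proof -
  have disk': "w \<in> Q" if "w \<in> P" "norm (u - w) \<le> r" for w
    using disk[of w] that assms(1,2) by (cases "w = u") (auto simp: disk_graph_def)
  let ?cells = "\<lambda>S. (voronoi_cell S u \<inter> cball u (r/2)) \<inter> (voronoi_cell S v \<inter> cball v (r/2))"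
  have "?cells P \<subseteq> ?cells Q"
    using voronoi_cell_antimono[OF \<open>Q \<subseteq> P\<close>] by blast
  moreover have "?cells Q \<subseteq> ?cells P"
    using voronoi_cell_localize[OF disk' \<open>u \<in> Q\<close>, of _ "r"]
    by (auto simp: dist_norm norm_minus_commute)
  moreover have "limited_delaunay_graph r P u v \<Longrightarrow> v \<in> Q"
    using disk limited_delaunay_graph_imp_disk_graph by blast
  ultimately show ?thesis
    using assms(1,2) unfolding limited_delaunay_graph_def by blast
qed

lemma neighbors_limited_delaunay_graph_localize:
  assumes "Q \<subseteq> P" "u \<in> Q" "\<And>w. disk_graph r P u w \<Longrightarrow> w \<in> Q"
  shows "neighbors (limited_delaunay_graph r) P u = neighbors (limited_delaunay_graph r) Q u"
  using limited_delaunay_graph_localize[OF assms] \<open>Q \<subseteq> P\<close>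
  unfolding neighbors_def limited_delaunay_graph_def by blast

theorem lemma1p5:
  fixes r :: real and n :: nat
  assumes "r > 0"
  shows "spatially_distributed n
           (\<lambda>p i. neighbors (limited_delaunay_graph r) (point_set n p) (p i))
           (disk_graph r)"
  unfolding spatially_distributed_def
proof (intro exI allI impI)
  fix p :: "nat \<Rightarrow> pt" and i assume "i < n"
  let ?P = "point_set n p"
  let ?N = "{p j | j. j < n \<and> p j \<in> neighbors (disk_graph r) ?P (p i)}"
  have "?N = neighbors (disk_graph r) ?P (p i)"
    unfolding neighbors_def point_set_def by blast
  then have "insert (p i) ?N \<subseteq> ?P" "\<And>w. disk_graph r ?P (p i) w \<Longrightarrow> w \<in> insert (p i) ?N"
    using \<open>i < n\<close> by (auto simp: neighbors_def point_set_def disk_graph_def)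
  then show "neighbors (limited_delaunay_graph r) ?P (p i) =
      (\<lambda>i x S. neighbors (limited_delaunay_graph r) (insert x S) x) i (p i) ?N"
    using neighbors_limited_delaunay_graph_localize by simp
qed

end
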